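(* Let $m=2k+1$ with $k\in\mathbb{N}$ and $\beta\in[\frac{2k+3}{2},\frac{k+1+\sqrt{k^2+6k+5}}{2})$. Let $i\in\{1,\ldots,m-1\}$ and let $x$ lie in the $i$-th fixed digit interval $[\frac{(i-1)\beta+m-(i-1)}{\beta(\beta-1)},\frac{i+1}{\beta}]$. If $i\in\{1,\ldots,k\}$ then $T_{\beta,i}(x)<\frac{k\beta+m-k}{\beta(\beta-1)}$, and if $i\in\{k+1,\ldots,m-1\}$ then $T_{\beta,i}(x)>\frac{k+1}{\beta}$.
   Context: $T_{\beta,i}(x)=\beta x-i$. *)

theory Defs
  imports Complex_Main
begin

definition T :: "real \<Rightarrow> nat \<Rightarrow> real \<Rightarrow> real" where
  "T \<beta> i x = \<beta> * x - real i"

end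

theory Submission
  imports Defs
begin

text \<open>For every digit i, T maps the i-th fixed digit interval into
  [(m + 1 - \<beta>)/(\<beta> - 1), 1], whatever i is.  Both claimed bounds then turn out to be
  equivalent to \<beta>^2 < (k + 1)(\<beta> + 1), and the upper bound on \<beta> says exactly that
  \<beta> lies below the positive root of t^2 - (k + 1) t - (k + 1).\<close>

lemma sq_less_below_pos_root:
  fixes c t :: real
  assumes "c / 2 \<le> t" and "t < (c + sqrt (c\<^sup>2 + 4 * c)) / 2"
  shows "t\<^sup>2 < c * t + c"
proof -
  have nonneg: "0 \<le> 2 * t - c"
    using assms(1) by linarith
  have lt: "2 * t - c < sqrt (c\<^sup>2 + 4 * c)"
    using assms(2) by (simp add: field_simps)
  have "(2 * t - c)\<^sup>2 < (sqrt (c\<^sup>2 + 4 * c))\<^sup>2"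
    using lt nonneg by (rule power_strict_mono) simp
  moreover have "0 < sqrt (c\<^sup>2 + 4 * c)"
    using lt nonneg by linarith
  then have "(sqrt (c\<^sup>2 + 4 * c))\<^sup>2 = c\<^sup>2 + 4 * c"
    by simp
  ultimately have "(2 * t - c)\<^sup>2 < c\<^sup>2 + 4 * c"
    by simp
  then show ?thesis
    by (simp add: power2_eq_square algebra_simps)
qed

lemma T_le_one:
  assumes "\<beta> > 0" and "x \<le> (real i + 1) / \<beta>"
  shows "T \<beta> i x \<le> 1"
  using assms by (simp add: T_def field_simps)

lemma T_ge_of_fixed_interval_left:
  fixes a :: real
  assumes "\<beta> > 1" and "((real i - 1) * \<beta> + a - (real i - 1)) / (\<beta> * (\<beta> - 1)) \<le> x"
  shows "(a + 1 - \<beta>) / (\<beta> - 1) \<le> T \<beta> i x"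
proof -
  have "(real i - 1) * (\<beta> - 1) + a \<le> \<beta> * x * (\<beta> - 1)"
    using assms by (simp add: field_simps)
  then show ?thesis
    using assms(1) by (simp add: T_def field_simps)
qed

theorem lemma3p5:
  fixes k m i :: nat and \<beta> x :: real
  assumes hm: "m = 2 * k + 1"
    and hb1: "(2 * real k + 3) / 2 \<le> \<beta>"
    and hb2: "\<beta> < (real k + 1 + sqrt (real k ^ 2 + 6 * real k + 5)) / 2"
    and hi: "1 \<le> i" "i \<le> m - 1"
    and hx1: "((real i - 1) * \<beta> + real m - (real i - 1)) / (\<beta> * (\<beta> - 1)) \<le> x"
    and hx2: "x \<le> (real i + 1) / \<beta>"
  shows "(i \<le> k \<longrightarrow> T \<beta> i x < (real k * \<beta> + real m - real k) / (\<beta> * (\<beta> - 1)))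
       \<and> (k + 1 \<le> i \<and> i \<le> m - 1 \<longrightarrow> T \<beta> i x > (real k + 1) / \<beta>)"
proof -
  have \<beta>: "\<beta> > 1"
    using hb1 by (simp add: field_simps)
  have "real k ^ 2 + 6 * real k + 5 = (real k + 1)\<^sup>2 + 4 * (real k + 1)"
    by (simp add: power2_eq_square algebra_simps)
  then have "\<beta> < (real k + 1 + sqrt ((real k + 1)\<^sup>2 + 4 * (real k + 1))) / 2"
    using hb2 by (simp only:)
  then have key: "\<beta>\<^sup>2 < (real k + 1) * \<beta> + (real k + 1)"
    using hb1 by (intro sq_less_below_pos_root) auto
  have m: "real m = 2 * real k + 1"
    using hm by simp
  have "T \<beta> i x \<le> 1"
    using \<beta> hx2 by (intro T_le_one) auto
  also have "1 < (real k * \<beta> + real m - real k) / (\<beta> * (\<beta> - 1))"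
    using \<beta> key m by (simp add: field_simps power2_eq_square)
  finally have upper: "T \<beta> i x < (real k * \<beta> + real m - real k) / (\<beta> * (\<beta> - 1))" .
  have "(real k + 1) / \<beta> < (real m + 1 - \<beta>) / (\<beta> - 1)"
    using \<beta> key m by (simp add: field_simps power2_eq_square)
  also have "\<dots> \<le> T \<beta> i x"
    using \<beta> hx1 by (rule T_ge_of_fixed_interval_left)
  finally have lower: "(real k + 1) / \<beta> < T \<beta> i x" .
  show ?thesis
    using upper lower by simp
qed

end
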